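(* Let $A,B,C$ be finite-dimensional quantum systems, $C'$ a copy of $C$, and let $\Lambda^{C\to AB}$ be a channel extension of a channel $\Lambda^{C\to B}$. Then $\Lambda^{C\to AB}$ is steerable if and only if the Choi–Jamiołkowski state $J_{C'AB}(\Lambda^{C\to AB})$ is steerable by Alice acting on $A$ (i.e. steerable from $A$ to $BC'$).
   Context: A channel extension of $\Lambda^{C\to B}$ is a channel (completely positive trace-preserving map) $\Lambda^{C\to AB}$ with $\mathrm{Tr}_A\circ\Lambda^{C\to AB}=\Lambda^{C\to B}$. An instrument is a collection $\{\Lambda_\lambda\}_\lambda$ of completely positive maps whose sum is a channel. A channel assemblage $\{\Lambda_{a|x}\}_{a,x}$ for $\Lambda^{C\to B}$ is a collection of completely positive maps with $\sum_a\Lambda_{a|x}=\Lambda^{C\to B}$ for all $x$; it is unsteerable if there exist an instrument $\{\Lambda_\lambda\}_\lambda$ and conditional probability distributions $p(a|x,\lambda)$ with $\Lambda_{a|x}=\sum_\lambda p(a|x,\lambda)\Lambda_\lambda$. A measurement assemblage on $A$ is a family $\{M^A_{a|x}\}_{a,x}$ with $\{M^A_{a|x}\}_a$ a POVM for each $x$; it induces the channel assemblage $\Lambda_{a|x}[X]=\mathrm{Tr}_A(M^A_{a|x}\Lambda^{C\to AB}[X])$. The extension $\Lambda^{C\to AB}$ is unsteerable if every measurement assemblage on $A$ induces an unsteerable channel assemblage, and steerable otherwise. The Choi–Jamiołkowski operator of a map $\Gamma^{C\to Y}$ is $J_{C'Y}(\Gamma)=(\mathrm{id}_{C'}\otimes\Gamma)[\psi_+^{CC'}]$,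 where $\psi_+^{CC'}$ is a fixed maximally entangled pure state of $C$ and $C'$. A bipartite state $\rho^{XY}$ is unsteerable by (a party acting on) $X$ if for every measurement assemblage $\{M^X_{a|x}\}$ on $X$ the state assemblage $\rho_{a|x}=\mathrm{Tr}_X(M^X_{a|x}\rho^{XY})$ can be written as $\rho_{a|x}=\sum_\lambda p(a|x,\lambda)\rho_\lambda$ with $\rho_\lambda\ge0$, $\sum_\lambda\rho_\lambda=\rho^Y$ and $p(a|x,\lambda)$ conditional probability distributions; otherwise it is steerable by $X$. *)

theory Defs
  imports "Jordan_Normal_Form.Matrix"
begin

(* Operators on a d-dimensional system are complex d x d matrices (carrier_mat d d).
   Composite systems X (dim x) and Y (dim y) use index  iX * y + iY  (X first). *)

type_synonym cmap = "complex mat \<Rightarrow> complex mat"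

definition tr :: "nat \<Rightarrow> complex mat \<Rightarrow> complex" where
  "tr d M = (\<Sum>i<d. M $$ (i,i))"

definition psd :: "nat \<Rightarrow> complex mat \<Rightarrow> bool" where
  "psd d M \<longleftrightarrow> M \<in> carrier_mat d d \<and>
     (\<forall>v :: nat \<Rightarrow> complex. let z = (\<Sum>i<d. \<Sum>j<d. cnj (v i) * M $$ (i,j) * v j)
        in z \<in> \<real> \<and> Re z \<ge> 0)"

definition msum :: "nat \<Rightarrow> nat \<Rightarrow> (nat \<Rightarrow> complex mat) \<Rightarrow> complex mat" where
  "msum d n F = mat d d (\<lambda>(i,j). \<Sum>k<n. F k $$ (i,j))"

definition tensor :: "complex mat \<Rightarrow> complex mat \<Rightarrow> complex mat" where
  "tensor P Q = mat (dim_row P * dim_row Q) (dim_col P * dim_col Q)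
     (\<lambda>(i,j). P $$ (i div dim_row Q, j div dim_col Q) * Q $$ (i mod dim_row Q, j mod dim_col Q))"

definition ptrace1 :: "nat \<Rightarrow> nat \<Rightarrow> complex mat \<Rightarrow> complex mat" where
  "ptrace1 x y M = mat y y (\<lambda>(i,j). \<Sum>k<x. M $$ (k*y+i, k*y+j))"

definition linear_cmap :: "nat \<Rightarrow> nat \<Rightarrow> cmap \<Rightarrow> bool" where
  "linear_cmap din dout \<Phi> \<longleftrightarrow>
     (\<forall>X \<in> carrier_mat din din. \<Phi> X \<in> carrier_mat dout dout) \<and>
     (\<forall>X \<in> carrier_mat din din. \<forall>Y \<in> carrier_mat din din. \<Phi> (X + Y) = \<Phi> X + \<Phi> Y) \<and>
     (\<forall>X \<in> carrier_mat din din. \<forall>c. \<Phi> (c \<cdot>\<^sub>m X) = c \<cdot>\<^sub>m \<Phi> X)"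

(* (id_n \<otimes> \<Phi>) applied to an operator on N \<otimes> In, N of dimension n *)
definition id_tensor :: "nat \<Rightarrow> nat \<Rightarrow> nat \<Rightarrow> cmap \<Rightarrow> complex mat \<Rightarrow> complex mat" where
  "id_tensor n din dout \<Phi> X = mat (n*dout) (n*dout) (\<lambda>(i,j).
      \<Phi> (mat din din (\<lambda>(k,l). X $$ ((i div dout)*din + k, (j div dout)*din + l)))
        $$ (i mod dout, j mod dout))"

definition CP :: "nat \<Rightarrow> nat \<Rightarrow> cmap \<Rightarrow> bool" where
  "CP din dout \<Phi> \<longleftrightarrow> linear_cmap din dout \<Phi> \<and>
     (\<forall>n X. psd (n*din) X \<longrightarrow> psd (n*dout) (id_tensor n din dout \<Phi> X))"

definition TP :: "nat \<Rightarrow> nat \<Rightarrow> cmap \<Rightarrow> bool" where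
  "TP din dout \<Phi> \<longleftrightarrow> (\<forall>X \<in> carrier_mat din din. tr dout (\<Phi> X) = tr din X)"

definition channel :: "nat \<Rightarrow> nat \<Rightarrow> cmap \<Rightarrow> bool" where
  "channel din dout \<Phi> \<longleftrightarrow> CP din dout \<Phi> \<and> TP din dout \<Phi>"

definition channel_extension :: "nat \<Rightarrow> nat \<Rightarrow> nat \<Rightarrow> cmap \<Rightarrow> cmap \<Rightarrow> bool" where
  "channel_extension dA dB dC \<Lambda>AB \<Lambda>B \<longleftrightarrow> channel dC (dA*dB) \<Lambda>AB \<and>
     (\<forall>X \<in> carrier_mat dC dC. ptrace1 dA dB (\<Lambda>AB X) = \<Lambda>B X)"

definition cond_prob :: "nat \<Rightarrow> nat \<Rightarrow> nat \<Rightarrow> (nat \<Rightarrow> nat \<Rightarrow> nat \<Rightarrow> real) \<Rightarrow> bool" where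
  "cond_prob na nx nl p \<longleftrightarrow> (\<forall>x<nx. \<forall>l<nl.
     (\<forall>a<na. p a x l \<ge> 0) \<and> (\<Sum>a<na. p a x l) = 1)"

definition instrument :: "nat \<Rightarrow> nat \<Rightarrow> nat \<Rightarrow> (nat \<Rightarrow> cmap) \<Rightarrow> bool" where
  "instrument din dout nl I \<longleftrightarrow> (\<forall>l<nl. CP din dout (I l)) \<and>
     channel din dout (\<lambda>X. msum dout nl (\<lambda>l. I l X))"

definition channel_assemblage :: "nat \<Rightarrow> nat \<Rightarrow> nat \<Rightarrow> nat \<Rightarrow> cmap \<Rightarrow> (nat \<Rightarrow> nat \<Rightarrow> cmap) \<Rightarrow> bool" where
  "channel_assemblage din dout na nx \<Lambda> As \<longleftrightarrow>
     (\<forall>a<na. \<forall>x<nx. CP din dout (As a x)) \<and>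
     (\<forall>x<nx. \<forall>X \<in> carrier_mat din din. msum dout na (\<lambda>a. As a x X) = \<Lambda> X)"

definition unsteerable_channel_assemblage ::
  "nat \<Rightarrow> nat \<Rightarrow> nat \<Rightarrow> nat \<Rightarrow> (nat \<Rightarrow> nat \<Rightarrow> cmap) \<Rightarrow> bool" where
  "unsteerable_channel_assemblage din dout na nx As \<longleftrightarrow>
     (\<exists>nl I p. instrument din dout nl I \<and> cond_prob na nx nl p \<and>
        (\<forall>a<na. \<forall>x<nx. \<forall>X \<in> carrier_mat din din.
           As a x X = msum dout nl (\<lambda>l. complex_of_real (p a x l) \<cdot>\<^sub>m I l X)))"

definition meas_assemblage :: "nat \<Rightarrow> nat \<Rightarrow> nat \<Rightarrow> (nat \<Rightarrow> nat \<Rightarrow> complex mat) \<Rightarrow> bool" where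
  "meas_assemblage d na nx M \<longleftrightarrow> (\<forall>x<nx.
     (\<forall>a<na. psd d (M a x)) \<and> msum d na (\<lambda>a. M a x) = 1\<^sub>m d)"

definition induced_assemblage :: "nat \<Rightarrow> nat \<Rightarrow> cmap \<Rightarrow> (nat \<Rightarrow> nat \<Rightarrow> complex mat) \<Rightarrow> nat \<Rightarrow> nat \<Rightarrow> cmap" where
  "induced_assemblage dA dB \<Lambda>AB M a x X = ptrace1 dA dB (tensor (M a x) (1\<^sub>m dB) * \<Lambda>AB X)"

definition unsteerable_extension :: "nat \<Rightarrow> nat \<Rightarrow> nat \<Rightarrow> cmap \<Rightarrow> bool" where
  "unsteerable_extension dA dB dC \<Lambda>AB \<longleftrightarrow>
     (\<forall>na nx M. meas_assemblage dA na nx M \<longrightarrow>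
        unsteerable_channel_assemblage dC dB na nx (induced_assemblage dA dB \<Lambda>AB M))"

definition steerable_extension :: "nat \<Rightarrow> nat \<Rightarrow> nat \<Rightarrow> cmap \<Rightarrow> bool" where
  "steerable_extension dA dB dC \<Lambda>AB \<longleftrightarrow> \<not> unsteerable_extension dA dB dC \<Lambda>AB"

(* the maximally entangled state |psi+> = d^{-1/2} \<Sum>_i |i>|i> on C' \<otimes> C *)
definition psi_plus :: "nat \<Rightarrow> complex mat" where
  "psi_plus d = mat (d*d) (d*d) (\<lambda>(i,j).
     if i div d = i mod d \<and> j div d = j mod d then 1 / of_nat d else 0)"

definition choi :: "nat \<Rightarrow> nat \<Rightarrow> cmap \<Rightarrow> complex mat" where
  "choi dC dY \<Gamma> = id_tensor dC dC dY \<Gamma> (psi_plus dC)"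

definition unsteerable_state :: "nat \<Rightarrow> nat \<Rightarrow> complex mat \<Rightarrow> bool" where
  "unsteerable_state dX dY \<rho> \<longleftrightarrow>
     (\<forall>na nx M. meas_assemblage dX na nx M \<longrightarrow>
        (\<exists>nl \<sigma> p. (\<forall>l<nl. psd dY (\<sigma> l)) \<and> msum dY nl \<sigma> = ptrace1 dX dY \<rho> \<and>
           cond_prob na nx nl p \<and>
           (\<forall>a<na. \<forall>x<nx. ptrace1 dX dY (tensor (M a x) (1\<^sub>m dY) * \<rho>) =
               msum dY nl (\<lambda>l. complex_of_real (p a x l) \<cdot>\<^sub>m \<sigma> l))))"

definition steerable_state :: "nat \<Rightarrow> nat \<Rightarrow> complex mat \<Rightarrow> bool" where
  "steerable_state dX dY \<rho> \<longleftrightarrow> \<not> unsteerable_state dX dY \<rho>"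

(* reorder an operator on C' \<otimes> A \<otimes> B into A \<otimes> (C' \<otimes> B), so that A is the first party *)
definition reorder_CAB_to_A_CB :: "nat \<Rightarrow> nat \<Rightarrow> nat \<Rightarrow> complex mat \<Rightarrow> complex mat" where
  "reorder_CAB_to_A_CB dC dA dB J = mat (dA*(dC*dB)) (dA*(dC*dB)) (\<lambda>(i,j).
     let iA = i div (dC*dB); iC = (i mod (dC*dB)) div dB; iB = i mod dB;
         jA = j div (dC*dB); jC = (j mod (dC*dB)) div dB; jB = j mod dB
     in J $$ (iC*(dA*dB) + iA*dB + iB, jC*(dA*dB) + jA*dB + jB))"

end

theory Submission
  imports Defs
begin

text \<open>
  Everything is transported along the Choi--Jamiolkowski correspondence. A linear map on \<open>C\<close>
  is recovered from its Choi operator, and Alice's measurement commutes with forming Choi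
  operators: \<open>Tr\<^sub>A ((M\<^bsub>a|x\<^esub> \<otimes> 1) J(\<Lambda>\<^bsup>C\<rightarrow>AB\<^esup>)) = J(\<Lambda>\<^bsub>a|x\<^esub>)\<close>, and in particular the reduced Choi
  state is \<open>J(\<Lambda>\<^bsup>C\<rightarrow>B\<^esup>)\<close>. So an instrument \<open>\<Lambda>\<^sub>\<lambda>\<close> explaining the channel assemblage gives
  the hidden states \<open>\<sigma>\<^sub>\<lambda> = J(\<Lambda>\<^sub>\<lambda>)\<close> explaining the state assemblage, and conversely. What remains
  is positivity and normalisation: Choi operators of CP maps are positive, and a positive
  operator \<open>S = \<Sum>\<^sub>r w\<^sub>r w\<^sub>r\<^sup>\<dagger>\<close> (Gram decomposition by Gaussian elimination) is the Choi operator
  of a map in Kraus form, hence CP; the instrument sums to \<open>\<Lambda>\<^bsup>C\<rightarrow>B\<^esup>\<close> because Alice's outcomes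
  cannot signal to Bob, \<open>\<Sum>\<^sub>a \<Lambda>\<^bsub>a|x\<^esub> = \<Lambda>\<^bsup>C\<rightarrow>B\<^esup>\<close>.
\<close>

lemma sum_lessThan_mult:
  fixes f :: "nat \<Rightarrow> 'a::comm_monoid_add"
  shows "(\<Sum>i<a*b. f i) = (\<Sum>k<a. \<Sum>j<b. f (k*b+j))"
  using sum.nat_group[of "\<lambda>j. f j" b a]
  by (simp add: sum.atLeastLessThan_shift_0 atLeast0LessThan mult.commute add.commute)

lemma mult_index_div_mod [simp]:
  fixes k j b :: nat
  assumes "j < b"
  shows "(k*b+j) div b = k" "(k*b+j) mod b = j"
  using assms by auto

lemma mult_index_less: "(k::nat) < a \<Longrightarrow> j < b \<Longrightarrow> k*b+j < a*b"
proof -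
  assume "k < a" "j < b"
  then have "k*b + j < Suc k * b" by simp
  also have "\<dots> \<le> a*b" using \<open>k < a\<close> by (intro mult_right_mono) auto
  finally show ?thesis .
qed

lemma mult_index_decomp:
  "(i::nat) < a*b \<Longrightarrow> i = (i div b)*b + i mod b \<and> i div b < a \<and> i mod b < b"
  by (metis less_mult_imp_div_less mod_less_divisor mult.commute
      mult_div_mod_eq not_gr0 not_less_zero mult_0_right)

lemma eq_mat_blockI:
  assumes "A \<in> carrier_mat (D*d) (D*d)" "B \<in> carrier_mat (D*d) (D*d)"
    and "\<And>c b c' b'. c < D \<Longrightarrow> b < d \<Longrightarrow> c' < D \<Longrightarrow> b' < d \<Longrightarrow>
           A $$ (c*d+b, c'*d+b') = B $$ (c*d+b, c'*d+b')"
  shows "A = B"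
proof (rule eq_matI)
  fix i j assume "i < dim_row B" "j < dim_col B"
  then have i: "i < D*d" and j: "j < D*d" using assms by auto
  from mult_index_decomp[OF i] mult_index_decomp[OF j] assms(3)[of "i div d" "i mod d" "j div d" "j mod d"]
  show "A $$ (i,j) = B $$ (i,j)" by metis
qed (use assms in auto)

lemma msum_entry: "i < d \<Longrightarrow> j < d \<Longrightarrow> msum d n F $$ (i,j) = (\<Sum>k<n. F k $$ (i,j))"
  by (simp add: msum_def)

lemma msum_carrier [simp]: "msum d n F \<in> carrier_mat d d"
  by (simp add: msum_def)

lemma msum_dim [simp]: "dim_row (msum d n F) = d" "dim_col (msum d n F) = d"
  by (simp_all add: msum_def)

lemma msum_cong: "(\<And>l. l < n \<Longrightarrow> F l = G l) \<Longrightarrow> msum d n F = msum d n G"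
  by (simp add: msum_def)

lemma msum_smult_entry:
  assumes "\<And>l. l < n \<Longrightarrow> F l \<in> carrier_mat d d" "i < d" "j < d"
  shows "msum d n (\<lambda>l. c l \<cdot>\<^sub>m F l) $$ (i,j) = (\<Sum>l<n. c l * F l $$ (i,j))"
proof -
  have "(c l \<cdot>\<^sub>m F l) $$ (i,j) = c l * F l $$ (i,j)" if "l < n" for l
    using assms(1)[OF that] assms(2,3) by simp
  then show ?thesis using assms(2,3) by (simp add: msum_entry)
qed

lemma linear_cmapD:
  assumes "linear_cmap din dout \<Phi>"
  shows "X \<in> carrier_mat din din \<Longrightarrow> \<Phi> X \<in> carrier_mat dout dout"
    "X \<in> carrier_mat din din \<Longrightarrow> Y \<in> carrier_mat din din \<Longrightarrow> \<Phi> (X + Y) = \<Phi> X + \<Phi> Y"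
    "X \<in> carrier_mat din din \<Longrightarrow> \<Phi> (c \<cdot>\<^sub>m X) = c \<cdot>\<^sub>m \<Phi> X"
  using assms unfolding linear_cmap_def by auto

lemma channel_linear: "channel din dout \<Phi> \<Longrightarrow> linear_cmap din dout \<Phi>"
  by (simp add: channel_def CP_def)

lemma id_tensor_cong:
  assumes "\<And>X. X \<in> carrier_mat din din \<Longrightarrow> \<Psi> X = \<Phi> X"
  shows "id_tensor n din dout \<Psi> Y = id_tensor n din dout \<Phi> Y"
  unfolding id_tensor_def using assms by simp

lemma channel_cong:
  assumes ch: "channel din dout \<Phi>" and eq: "\<And>X. X \<in> carrier_mat din din \<Longrightarrow> \<Psi> X = \<Phi> X"
  shows "channel din dout \<Psi>"
proof -
  have lin: "linear_cmap din dout \<Phi>" using ch by (simp add: channel_linear)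
  have "linear_cmap din dout \<Psi>"
    unfolding linear_cmap_def
  proof (intro conjI ballI allI)
    fix X :: "complex mat" assume X: "X \<in> carrier_mat din din"
    show "\<Psi> X \<in> carrier_mat dout dout" using eq[OF X] linear_cmapD(1)[OF lin X] by simp
  next
    fix X Y :: "complex mat" assume X: "X \<in> carrier_mat din din" and Y: "Y \<in> carrier_mat din din"
    have "X + Y \<in> carrier_mat din din" using X Y by simp
    then show "\<Psi> (X + Y) = \<Psi> X + \<Psi> Y" using eq X Y linear_cmapD(2)[OF lin X Y] by simp
  next
    fix X :: "complex mat" and c assume X: "X \<in> carrier_mat din din"
    have "c \<cdot>\<^sub>m X \<in> carrier_mat din din" using X by simp
    then show "\<Psi> (c \<cdot>\<^sub>m X) = c \<cdot>\<^sub>m \<Psi> X" using eq X linear_cmapD(3)[OF lin X] by simp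
  qed
  moreover have "\<forall>n X. psd (n*din) X \<longrightarrow> psd (n*dout) (id_tensor n din dout \<Psi> X)"
    using ch eq unfolding channel_def CP_def by (simp add: id_tensor_cong[OF eq])
  moreover have "TP din dout \<Psi>" using ch eq unfolding channel_def TP_def by simp
  ultimately show ?thesis unfolding channel_def CP_def by simp
qed

lemma channel_extension_linear:
  "channel_extension dA dB dC \<Lambda>AB \<Lambda>B \<Longrightarrow> linear_cmap dC (dA*dB) \<Lambda>AB"
  by (simp add: channel_extension_def channel_linear)

lemma channel_extensionD:
  assumes "channel_extension dA dB dC \<Lambda>AB \<Lambda>B" "X \<in> carrier_mat dC dC"
  shows "\<Lambda>AB X \<in> carrier_mat (dA*dB) (dA*dB)" "ptrace1 dA dB (\<Lambda>AB X) = \<Lambda>B X"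
  using assms linear_cmapD(1)[OF channel_extension_linear[OF assms(1)]]
  by (simp_all add: channel_extension_def)

text \<open>The \<open>(c,c')\<close> block \<open>|c\<rangle>\<langle>c'| / D\<close> of \<open>psi_plus D\<close>.\<close>

definition psi_block :: "nat \<Rightarrow> nat \<Rightarrow> nat \<Rightarrow> complex mat" where
  "psi_block D c c' = mat D D (\<lambda>(k,l). if k = c \<and> l = c' then 1 / of_nat D else 0)"

lemma psi_block_carrier [simp]: "psi_block D c c' \<in> carrier_mat D D"
  by (simp add: psi_block_def)

lemma choi_carrier [simp]: "choi D dY \<Gamma> \<in> carrier_mat (D*dY) (D*dY)"
  by (simp add: choi_def id_tensor_def)

lemma choi_dim [simp]: "dim_row (choi D dY \<Gamma>) = D*dY" "dim_col (choi D dY \<Gamma>) = D*dY"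
  by (simp_all add: choi_def id_tensor_def)

lemma choi_entry:
  assumes "c < D" "c' < D" "y < dY" "y' < dY"
  shows "choi D dY \<Gamma> $$ (c*dY+y, c'*dY+y') = \<Gamma> (psi_block D c c') $$ (y,y')"
proof -
  have "mat D D (\<lambda>(k,l). psi_plus D $$ (c*D + k, c'*D + l)) = psi_block D c c'"
    using assms mult_index_less by (auto simp: psi_plus_def psi_block_def intro!: eq_matI)
  then show ?thesis
    unfolding choi_def id_tensor_def using assms mult_index_less by simp
qed

lemma linear_cmap_expansion:
  assumes lin: "linear_cmap D dY \<Gamma>" and X: "X \<in> carrier_mat D D" and D: "D > 0"
    and y: "y < dY" "y' < dY"
  shows "\<Gamma> X $$ (y,y') =
    of_nat D * (\<Sum>c<D. \<Sum>c'<D. X$$(c,c') * \<Gamma> (psi_block D c c') $$ (y,y'))"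
proof -
  define P where "P S = mat D D (\<lambda>(i,j). if (i,j) \<in> S then X$$(i,j) else 0)" for S
  have P_carrier: "P S \<in> carrier_mat D D" for S by (simp add: P_def)
  have expand: "\<Gamma> (P S) $$ (y,y') =
      of_nat D * (\<Sum>(c,c')\<in>S. X$$(c,c') * \<Gamma> (psi_block D c c') $$ (y,y'))" if "finite S" for S
    using that
  proof (induction S rule: finite_induct)
    case empty
    have "P {} = 0 \<cdot>\<^sub>m P {}" by (auto simp: P_def)
    then have "\<Gamma> (P {}) = 0 \<cdot>\<^sub>m \<Gamma> (P {})" using linear_cmapD(3)[OF lin P_carrier] by metis
    moreover have "\<Gamma> (P {}) \<in> carrier_mat dY dY" using linear_cmapD(1)[OF lin P_carrier] .
    ultimately have "\<Gamma> (P {}) $$ (y,y') = 0" using y by (metis index_smult_mat(1) carrier_matD mult_zero_left)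
    then show ?case by simp
  next
    case (insert p S)
    obtain a b where p: "p = (a,b)" by (cases p)
    have "P (insert p S) = P S + (of_nat D * X$$(a,b)) \<cdot>\<^sub>m psi_block D a b"
      using insert(2) D by (auto simp: P_def psi_block_def p)
    then have "\<Gamma> (P (insert p S)) = \<Gamma> (P S) + (of_nat D * X$$(a,b)) \<cdot>\<^sub>m \<Gamma> (psi_block D a b)"
      using linear_cmapD[OF lin] P_carrier by simp
    moreover have "\<Gamma> (P S) \<in> carrier_mat dY dY" "\<Gamma> (psi_block D a b) \<in> carrier_mat dY dY"
      using linear_cmapD(1)[OF lin] P_carrier by auto
    ultimately show ?case using insert y by (simp add: p algebra_simps)
  qed
  have "P ({..<D} \<times> {..<D}) = X" using X by (auto simp: P_def)
  with expand[of "{..<D} \<times> {..<D}"] show ?thesis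
    by (simp add: sum.cartesian_product)
qed

lemma linear_cmap_choi_expansion:
  assumes "linear_cmap D dY \<Gamma>" "X \<in> carrier_mat D D" "D > 0" "y < dY" "y' < dY"
  shows "\<Gamma> X $$ (y,y') =
    of_nat D * (\<Sum>c<D. \<Sum>c'<D. X$$(c,c') * choi D dY \<Gamma> $$ (c*dY+y, c'*dY+y'))"
  unfolding linear_cmap_expansion[OF assms] using assms by (simp add: choi_entry)

lemma choi_cong:
  "(\<And>X. X \<in> carrier_mat D D \<Longrightarrow> \<Psi> X = \<Gamma> X) \<Longrightarrow> choi D dY \<Psi> = choi D dY \<Gamma>"
  unfolding choi_def id_tensor_def by simp

lemma choi_smult:
  assumes "\<And>X. X \<in> carrier_mat D D \<Longrightarrow> \<Gamma> X \<in> carrier_mat dY dY"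
  shows "choi D dY (\<lambda>X. c \<cdot>\<^sub>m \<Gamma> X) = c \<cdot>\<^sub>m choi D dY \<Gamma>"
proof (rule eq_mat_blockI[OF choi_carrier])
  fix k b k' b' assume "k < D" "b < dY" "k' < D" "b' < dY"
  moreover have "k*dY+b < D*dY" "k'*dY+b' < D*dY"
    using calculation mult_index_less by auto
  ultimately show "choi D dY (\<lambda>X. c \<cdot>\<^sub>m \<Gamma> X) $$ (k*dY+b, k'*dY+b') =
      (c \<cdot>\<^sub>m choi D dY \<Gamma>) $$ (k*dY+b, k'*dY+b')"
    using assms[OF psi_block_carrier, of k k'] by (simp add: choi_entry)
qed simp

lemma choi_msum:
  assumes "\<And>l X. l < n \<Longrightarrow> X \<in> carrier_mat D D \<Longrightarrow> \<Phi> l X \<in> carrier_mat dY dY"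
  shows "choi D dY (\<lambda>X. msum dY n (\<lambda>l. \<Phi> l X)) = msum (D*dY) n (\<lambda>l. choi D dY (\<Phi> l))"
proof (rule eq_mat_blockI[OF choi_carrier msum_carrier])
  fix k b k' b' assume "k < D" "b < dY" "k' < D" "b' < dY"
  then show "choi D dY (\<lambda>X. msum dY n (\<lambda>l. \<Phi> l X)) $$ (k*dY+b, k'*dY+b') =
      msum (D*dY) n (\<lambda>l. choi D dY (\<Phi> l)) $$ (k*dY+b, k'*dY+b')"
    using mult_index_less by (simp add: choi_entry msum_entry)
qed

lemma tensor_carrier [simp]: "N \<in> carrier_mat a a \<Longrightarrow> tensor N (1\<^sub>m d) \<in> carrier_mat (a*d) (a*d)"
  by (simp add: tensor_def)

lemma tensor_one_one: "tensor (1\<^sub>m a) (1\<^sub>m d) = 1\<^sub>m (a*d)"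
proof (rule eq_matI)
  fix i j assume "i < dim_row (1\<^sub>m (a*d))" "j < dim_col (1\<^sub>m (a*d))"
  then have "i < a*d" "j < a*d" by simp_all
  with mult_index_decomp[of i a d] mult_index_decomp[of j a d]
  show "tensor (1\<^sub>m a) (1\<^sub>m d) $$ (i,j) = 1\<^sub>m (a*d) $$ (i,j)"
    by (auto simp: tensor_def) (metis div_mult_mod_eq)
qed (simp_all add: tensor_def)

lemma ptrace1_tensor_mult_entry:
  assumes N: "N \<in> carrier_mat dA dA" and Y: "Y \<in> carrier_mat (dA*d) (dA*d)"
    and i: "i < d" and j: "j < d"
  shows "ptrace1 dA d (tensor N (1\<^sub>m d) * Y) $$ (i,j) =
    (\<Sum>k<dA. \<Sum>k'<dA. N$$(k,k') * Y$$(k'*d+i, k*d+j))"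
proof -
  have "(tensor N (1\<^sub>m d) * Y) $$ (k*d+i, k*d+j) = (\<Sum>k'<dA. N$$(k,k') * Y$$(k'*d+i, k*d+j))"
    if k: "k < dA" for k
  proof -
    have "(tensor N (1\<^sub>m d) * Y) $$ (k*d+i, k*d+j) =
        (\<Sum>m<dA*d. tensor N (1\<^sub>m d) $$ (k*d+i, m) * Y $$ (m, k*d+j))"
      using k i j N Y mult_index_less by (simp add: tensor_def scalar_prod_def lessThan_atLeast0)
    also have "\<dots> =
        (\<Sum>k'<dA. \<Sum>i'<d. tensor N (1\<^sub>m d) $$ (k*d+i, k'*d+i') * Y $$ (k'*d+i', k*d+j))"
      by (rule sum_lessThan_mult)
    also have "\<dots> = (\<Sum>k'<dA. \<Sum>i'<d. if i' = i then N$$(k,k') * Y$$(k'*d+i, k*d+j) else 0)"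
      using k i N mult_index_less by (intro sum.cong refl) (auto simp: tensor_def)
    finally show ?thesis using i by simp
  qed
  then show ?thesis using i j by (simp add: ptrace1_def)
qed

lemma ptrace1_add:
  "A \<in> carrier_mat (x*y) (x*y) \<Longrightarrow> B \<in> carrier_mat (x*y) (x*y) \<Longrightarrow>
   ptrace1 x y (A + B) = ptrace1 x y A + ptrace1 x y B"
  by (auto simp: ptrace1_def sum.distrib mult_index_less intro!: eq_matI)

lemma ptrace1_smult:
  "A \<in> carrier_mat (x*y) (x*y) \<Longrightarrow> ptrace1 x y (c \<cdot>\<^sub>m A) = c \<cdot>\<^sub>m ptrace1 x y A"
  by (auto simp: ptrace1_def sum_distrib_left mult_index_less intro!: eq_matI)

lemma linear_cmap_ptrace1_tensor_mult:
  assumes lin: "linear_cmap dC (dA*dB) \<Lambda>" and N: "N \<in> carrier_mat dA dA"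
  shows "linear_cmap dC dB (\<lambda>X. ptrace1 dA dB (tensor N (1\<^sub>m dB) * \<Lambda> X))"
  unfolding linear_cmap_def
proof (intro conjI ballI allI)
  fix X Y :: "complex mat" assume X: "X \<in> carrier_mat dC dC" and Y: "Y \<in> carrier_mat dC dC"
  have T: "tensor N (1\<^sub>m dB) \<in> carrier_mat (dA*dB) (dA*dB)" using N by simp
  have LX: "\<Lambda> X \<in> carrier_mat (dA*dB) (dA*dB)" and LY: "\<Lambda> Y \<in> carrier_mat (dA*dB) (dA*dB)"
    using linear_cmapD(1)[OF lin] X Y by auto
  show "ptrace1 dA dB (tensor N (1\<^sub>m dB) * \<Lambda> (X + Y)) =
      ptrace1 dA dB (tensor N (1\<^sub>m dB) * \<Lambda> X) + ptrace1 dA dB (tensor N (1\<^sub>m dB) * \<Lambda> Y)"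
    using linear_cmapD(2)[OF lin X Y] mult_add_distrib_mat[OF T LX LY] T LX LY
    by (simp add: ptrace1_add)
  fix c
  show "ptrace1 dA dB (tensor N (1\<^sub>m dB) * \<Lambda> (c \<cdot>\<^sub>m X)) =
      c \<cdot>\<^sub>m ptrace1 dA dB (tensor N (1\<^sub>m dB) * \<Lambda> X)"
    using linear_cmapD(3)[OF lin X] mult_smult_distrib[OF T LX] T LX
    by (simp add: ptrace1_smult)
qed (simp add: ptrace1_def)

lemma reorder_CAB_to_A_CB_carrier [simp]:
  "reorder_CAB_to_A_CB dC dA dB J \<in> carrier_mat (dA*(dC*dB)) (dA*(dC*dB))"
  by (simp add: reorder_CAB_to_A_CB_def)

lemma reorder_CAB_to_A_CB_entry:
  assumes "k < dA" "k' < dA" "c < dC" "c' < dC" "b < dB" "b' < dB"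
  shows "reorder_CAB_to_A_CB dC dA dB J $$ (k*(dC*dB) + (c*dB+b), k'*(dC*dB) + (c'*dB+b'))
     = J $$ (c*(dA*dB) + (k*dB+b), c'*(dA*dB) + (k'*dB+b'))"
proof -
  have q: "c*dB+b < dC*dB" "c'*dB+b' < dC*dB" using assms mult_index_less by auto
  then have r: "k*(dC*dB) + (c*dB+b) < dA*(dC*dB)" "k'*(dC*dB) + (c'*dB+b') < dA*(dC*dB)"
    using assms mult_index_less by auto
  have "k*(dC*dB) + (c*dB+b) = (k*dC + c)*dB + b" "k'*(dC*dB) + (c'*dB+b') = (k'*dC + c')*dB + b'"
    by (simp_all add: algebra_simps)
  then have "(k*(dC*dB) + (c*dB+b)) mod dB = b" "(k'*(dC*dB) + (c'*dB+b')) mod dB = b'"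
    using assms by (metis mult_index_div_mod(2))+
  with q r assms show ?thesis by (simp add: reorder_CAB_to_A_CB_def Let_def add.assoc)
qed

lemma ptrace1_tensor_mult_reorder_choi:
  assumes car: "\<And>X. X \<in> carrier_mat dC dC \<Longrightarrow> \<Lambda> X \<in> carrier_mat (dA*dB) (dA*dB)"
    and N: "N \<in> carrier_mat dA dA"
  shows "ptrace1 dA (dC*dB) (tensor N (1\<^sub>m (dC*dB)) * reorder_CAB_to_A_CB dC dA dB (choi dC (dA*dB) \<Lambda>))
       = choi dC dB (\<lambda>X. ptrace1 dA dB (tensor N (1\<^sub>m dB) * \<Lambda> X))"
proof (rule eq_mat_blockI[OF _ choi_carrier])
  fix c b c' b' assume c: "c < dC" and b: "b < dB" and c': "c' < dC" and b': "b' < dB"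
  let ?R = "reorder_CAB_to_A_CB dC dA dB (choi dC (dA*dB) \<Lambda>)"
  let ?L = "\<Lambda> (psi_block dC c c')"
  have "c*dB+b < dC*dB" "c'*dB+b' < dC*dB" using c b c' b' mult_index_less by auto
  then have "ptrace1 dA (dC*dB) (tensor N (1\<^sub>m (dC*dB)) * ?R) $$ (c*dB+b, c'*dB+b')
     = (\<Sum>k<dA. \<Sum>k'<dA. N$$(k,k') * ?R $$ (k'*(dC*dB)+(c*dB+b), k*(dC*dB)+(c'*dB+b')))"
    by (intro ptrace1_tensor_mult_entry N) simp_all
  also have "\<dots> = (\<Sum>k<dA. \<Sum>k'<dA. N$$(k,k') * ?L $$ (k'*dB+b, k*dB+b'))"
    using c c' b b' mult_index_less
    by (intro sum.cong refl) (simp add: reorder_CAB_to_A_CB_entry choi_entry)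
  also have "\<dots> = ptrace1 dA dB (tensor N (1\<^sub>m dB) * ?L) $$ (b,b')"
    using ptrace1_tensor_mult_entry[OF N car b b'] by simp
  finally show "ptrace1 dA (dC*dB) (tensor N (1\<^sub>m (dC*dB)) * ?R) $$ (c*dB+b, c'*dB+b')
     = choi dC dB (\<lambda>X. ptrace1 dA dB (tensor N (1\<^sub>m dB) * \<Lambda> X)) $$ (c*dB+b, c'*dB+b')"
    using c c' b b' by (simp add: choi_entry)
qed (simp add: ptrace1_def)

lemma ptrace1_reorder_choi:
  assumes "\<And>X. X \<in> carrier_mat dC dC \<Longrightarrow> \<Lambda> X \<in> carrier_mat (dA*dB) (dA*dB)"
  shows "ptrace1 dA (dC*dB) (reorder_CAB_to_A_CB dC dA dB (choi dC (dA*dB) \<Lambda>))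
       = choi dC dB (\<lambda>X. ptrace1 dA dB (\<Lambda> X))"
proof -
  have "choi dC dB (\<lambda>X. ptrace1 dA dB (tensor (1\<^sub>m dA) (1\<^sub>m dB) * \<Lambda> X)) =
      choi dC dB (\<lambda>X. ptrace1 dA dB (\<Lambda> X))"
    using left_mult_one_mat[OF assms] by (intro choi_cong) (simp add: tensor_one_one)
  with ptrace1_tensor_mult_reorder_choi[of dC \<Lambda> dA dB "1\<^sub>m dA", OF assms]
  show ?thesis by (simp add: tensor_one_one left_mult_one_mat[OF reorder_CAB_to_A_CB_carrier])
qed

section \<open>Gram decomposition of positive semidefinite matrices\<close>

text \<open>Positive semidefiniteness for matrices given by entry functions, so that Schur complements
  can be formed without building matrices.\<close>

definition qform ::
  "nat \<Rightarrow> (nat \<Rightarrow> nat \<Rightarrow> complex) \<Rightarrow> (nat \<Rightarrow> complex) \<Rightarrow> (nat \<Rightarrow> complex) \<Rightarrow> complex" where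
  "qform d A u v = (\<Sum>i<d. \<Sum>j<d. cnj (u i) * A i j * v j)"

definition psd_form :: "nat \<Rightarrow> (nat \<Rightarrow> nat \<Rightarrow> complex) \<Rightarrow> bool" where
  "psd_form d A \<longleftrightarrow> (\<forall>v. qform d A v v \<in> \<real> \<and> Re (qform d A v v) \<ge> 0)"

lemma psd_iff_psd_form: "psd d M \<longleftrightarrow> M \<in> carrier_mat d d \<and> psd_form d (\<lambda>i j. M $$ (i,j))"
  by (simp add: psd_def psd_form_def qform_def Let_def)

lemma qform_add_left: "qform d A (\<lambda>i. u1 i + u2 i) v = qform d A u1 v + qform d A u2 v"
  by (simp add: qform_def ring_distribs sum.distrib)

lemma qform_add_right: "qform d A u (\<lambda>i. v1 i + v2 i) = qform d A u v1 + qform d A u v2"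
  by (simp add: qform_def ring_distribs sum.distrib)

lemma qform_delta_left:
  "k < d \<Longrightarrow> qform d A (\<lambda>i. if i = k then \<tau> else 0) v = cnj \<tau> * (\<Sum>j<d. A k j * v j)"
proof -
  assume k: "k < d"
  have "qform d A (\<lambda>i. if i = k then \<tau> else 0) v =
      (\<Sum>i<d. if i = k then cnj \<tau> * (\<Sum>j<d. A k j * v j) else 0)"
    unfolding qform_def by (intro sum.cong refl) (auto simp: sum_distrib_left mult.assoc)
  also have "\<dots> = cnj \<tau> * (\<Sum>j<d. A k j * v j)" using k by simp
  finally show ?thesis .
qed

lemma qform_delta_right:
  "k < d \<Longrightarrow> qform d A u (\<lambda>j. if j = k then \<tau> else 0) = (\<Sum>i<d. cnj (u i) * A i k) * \<tau>"
proof -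
  assume k: "k < d"
  have "qform d A u (\<lambda>j. if j = k then \<tau> else 0) = (\<Sum>i<d. cnj (u i) * A i k * \<tau>)"
    unfolding qform_def by (intro sum.cong refl) (auto simp: k if_distrib cong: if_cong)
  also have "\<dots> = (\<Sum>i<d. cnj (u i) * A i k) * \<tau>" by (simp add: sum_distrib_right)
  finally show ?thesis .
qed

lemma psd_formD: "psd_form d A \<Longrightarrow> qform d A v v \<in> \<real> \<and> Re (qform d A v v) \<ge> 0"
  by (simp add: psd_form_def)

lemma psd_form_two_point:
  fixes \<alpha> \<beta> :: complex
  assumes P: "psd_form d A" and i: "i < d" and j: "j < d"
  defines "z \<equiv> cnj \<alpha> * A i i * \<alpha> + cnj \<alpha> * A i j * \<beta> + cnj \<beta> * A j i * \<alpha> + cnj \<beta> * A j j * \<beta>"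
  shows "z \<in> \<real> \<and> Re z \<ge> 0"
proof -
  let ?v = "\<lambda>k. (if k = i then \<alpha> else 0) + (if k = j then \<beta> else 0)"
  have "qform d A ?v ?v = z"
    unfolding qform_add_left qform_add_right z_def using i j
    by (simp add: qform_delta_left if_distrib cong: if_cong)
  then show ?thesis using psd_formD[OF P, of ?v] by simp
qed

lemma psd_form_diag: "psd_form d A \<Longrightarrow> k < d \<Longrightarrow> A k k \<in> \<real> \<and> Re (A k k) \<ge> 0"
  using psd_form_two_point[of d A k k 1 0] by simp

lemma psd_form_herm:
  assumes P: "psd_form d A" and i: "i < d" and j: "j < d"
  shows "A j i = cnj (A i j)"
proof -
  have "A i i \<in> \<real>" "A j j \<in> \<real>" using psd_form_diag[OF P] i j by auto
  moreover have "A i i + A i j + A j i + A j j \<in> \<real>"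
    using psd_form_two_point[OF P i j, of 1 1] by simp
  moreover have "A i i + \<i> * A i j - \<i> * A j i + A j j \<in> \<real>"
    using psd_form_two_point[OF P i j, of 1 \<i>] by (simp add: algebra_simps)
  ultimately have "Im (A i j + A j i) = 0" "Re (A i j - A j i) = 0"
    by (auto simp: complex_is_Real_iff)
  then show ?thesis by (simp add: complex_eq_iff)
qed

lemma psd_form_zero_row:
  assumes P: "psd_form d A" and k: "k < d" and j: "j < d" and z0: "A k k = 0"
  shows "A k j = 0"
proof (rule ccontr)
  assume "A k j \<noteq> 0"
  define n where "n = (cmod (A k j))^2"
  have n0: "n > 0" using \<open>A k j \<noteq> 0\<close> by (simp add: n_def)
  have czz: "cnj (A k j) * A k j = of_real n"
    unfolding n_def using complex_norm_square[of "A k j"] by (simp add: mult.commute)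
  define r where "r = (Re (A j j) + 1) / (2*n)"
  define t where "t = - of_real r * A k j"
    \<comment> \<open>the form at \<open>t e\<^sub>k + e\<^sub>j\<close> is \<open>A j j - (Re (A j j) + 1)\<close>, which has negative real part\<close>
  have "cnj t * A k k * t + cnj t * A k j * 1 + cnj 1 * A j k * t + cnj 1 * A j j * 1
      = cnj t * A k j + cnj (A k j) * t + A j j"
    using z0 psd_form_herm[OF P k j] by simp
  also have "\<dots> = - of_real (2*r*n) + A j j"
    unfolding t_def using czz by (simp add: algebra_simps)
  also have "2*r*n = Re (A j j) + 1" using n0 by (simp add: r_def)
  finally show False using psd_form_two_point[OF P k j, of t 1] by simp
qed

lemma qform_shift:
  assumes k: "k < d"
  shows "qform d A (\<lambda>i. v i + (if i = k then \<tau> else 0)) (\<lambda>i. v i + (if i = k then \<tau> else 0)) =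
    qform d A v v + (\<Sum>i<d. cnj (v i) * A i k) * \<tau> + cnj \<tau> * (\<Sum>j<d. A k j * v j) +
    cnj \<tau> * A k k * \<tau>"
proof -
  have "(\<Sum>j<d. f j * (if j = k then \<tau> else 0)) = f k * \<tau>" for f :: "nat \<Rightarrow> complex"
    using k by (simp add: if_distrib cong: if_cong)
  then show ?thesis
    unfolding qform_add_left qform_add_right using k by (simp add: qform_delta_left qform_delta_right)
qed

lemma qform_schur_complement:
  "qform d (\<lambda>s t. A s t - A s k * A k t / a) v v =
   qform d A v v - (\<Sum>i<d. cnj (v i) * A i k) * (\<Sum>j<d. A k j * v j) / a"
proof -
  have "qform d (\<lambda>s t. A s t - A s k * A k t / a) v v =
      qform d A v v - (\<Sum>i<d. \<Sum>j<d. cnj (v i) * A i k * (A k j * v j)) / a"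
    unfolding qform_def by (simp add: algebra_simps sum_subtractf sum_divide_distrib)
  then show ?thesis by (simp add: sum_product)
qed

lemma psd_form_schur_complement:
  assumes P: "psd_form d A" and k: "k < d" and a: "A k k \<noteq> 0"
  shows "psd_form d (\<lambda>s t. A s t - A s k * A k t / A k k)"
  unfolding psd_form_def
proof
  fix v
  define \<beta> where "\<beta> = (\<Sum>j<d. A k j * v j)"
  define \<gamma> where "\<gamma> = (\<Sum>i<d. cnj (v i) * A i k)"
  define \<tau> where "\<tau> = - \<beta> / A k k"
  let ?w = "\<lambda>i. v i + (if i = k then \<tau> else 0)"
  have "qform d A ?w ?w = qform d A v v + \<gamma> * \<tau> + cnj \<tau> * \<beta> + cnj \<tau> * A k k * \<tau>"
    using qform_shift[OF k] by (simp add: \<beta>_def \<gamma>_def)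
  also have "cnj \<tau> * A k k * \<tau> = - cnj \<tau> * \<beta>" using a by (simp add: \<tau>_def)
  also have "qform d A v v + \<gamma> * \<tau> + cnj \<tau> * \<beta> + - cnj \<tau> * \<beta> = qform d A v v - \<gamma> * \<beta> / A k k"
    by (simp add: \<tau>_def)
  also have "\<dots> = qform d (\<lambda>s t. A s t - A s k * A k t / A k k) v v"
    by (simp add: qform_schur_complement \<beta>_def \<gamma>_def)
  finally show "qform d (\<lambda>s t. A s t - A s k * A k t / A k k) v v \<in> \<real> \<and>
      0 \<le> Re (qform d (\<lambda>s t. A s t - A s k * A k t / A k k) v v)"
    using psd_formD[OF P, of ?w] by simp
qed

lemma psd_form_vanishing_Suc:
  assumes P: "psd_form d A" and k: "k < d" and z: "A k k = 0"
    and Z: "\<forall>i<d. \<forall>j<d. (i < k \<or> j < k) \<longrightarrow> A i j = 0"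
  shows "\<forall>i<d. \<forall>j<d. (i < Suc k \<or> j < Suc k) \<longrightarrow> A i j = 0"
proof -
  have "A k j = 0" "A j k = 0" if "j < d" for j
    using psd_form_zero_row[OF P k that z] psd_form_herm[OF P k that] by simp_all
  with Z show ?thesis by (auto simp: less_Suc_eq)
qed

lemma schur_complement_vanishing_Suc:
  fixes A :: "nat \<Rightarrow> nat \<Rightarrow> 'a::field"
  assumes "A k k \<noteq> 0" and "\<forall>i<d. \<forall>j<d. (i < k \<or> j < k) \<longrightarrow> A i j = 0" and "k < d"
  shows "\<forall>i<d. \<forall>j<d. (i < Suc k \<or> j < Suc k) \<longrightarrow> A i j - A i k * A k j / A k k = 0"
  using assms by (auto simp: less_Suc_eq)

lemma psd_form_pivot_rank_one:
  assumes P: "psd_form d A" and k: "k < d" and a: "A k k \<noteq> 0" and t: "t < d"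
  defines "z \<equiv> \<lambda>s. A s k / of_real (sqrt (Re (A k k)))"
  shows "A s k * A k t / A k k = z s * cnj (z t)"
proof -
  define x where "x = (of_real (sqrt (Re (A k k))) :: complex)"
  have "A k k \<in> \<real>" "Re (A k k) \<ge> 0" using psd_form_diag[OF P k] by auto
  then have "x * x = A k k"
    unfolding x_def of_real_mult[symmetric] by (simp add: complex_is_Real_iff complex_eq_iff)
  moreover have "cnj (z t) = A k t / x"
    using psd_form_herm[OF P t k] by (simp add: z_def x_def)
  ultimately show ?thesis by (simp add: z_def x_def[symmetric])
qed

text \<open>Gaussian elimination: pivot on the first row not yet cleared; a zero pivot clears its row,
  otherwise \<open>A\<close> is its Schur complement plus a rank-one term.\<close>

lemma psd_form_gram_if_vanishing:
  assumes "psd_form d A" and "\<forall>i<d. \<forall>j<d. (i < k \<or> j < k) \<longrightarrow> A i j = 0"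
  shows "\<exists>(R::nat) w. \<forall>s<d. \<forall>t<d. A s t = (\<Sum>r<R. w r s * cnj (w r t))"
  using assms
proof (induction "d - k" arbitrary: A k)
  case 0
  then have "\<forall>s<d. \<forall>t<d. A s t = (\<Sum>r<(0::nat). w r s * cnj (w r t))"
    for w :: "nat \<Rightarrow> nat \<Rightarrow> complex" by auto
  then show ?case by (intro exI)
next
  case (Suc m)
  from Suc.hyps(2) have k: "k < d" and m: "m = d - Suc k" by auto
  show ?case
  proof (cases "A k k = 0")
    case True
    show ?thesis by (rule Suc.hyps(1)[OF m Suc.prems(1) psd_form_vanishing_Suc[OF Suc.prems(1) k True Suc.prems(2)]])
  next
    case False
    have "\<exists>(R::nat) w. \<forall>s<d. \<forall>t<d. A s t - A s k * A k t / A k k = (\<Sum>r<R. w r s * cnj (w r t))"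
      by (rule Suc.hyps(1)[OF m psd_form_schur_complement[OF Suc.prems(1) k False]
          schur_complement_vanishing_Suc[OF False Suc.prems(2) k]])
    then obtain R :: nat and w where w: "\<forall>s<d. \<forall>t<d. A s t - A s k * A k t / A k k = (\<Sum>r<R. w r s * cnj (w r t))"
      by blast
    define z where "z s = A s k / of_real (sqrt (Re (A k k)))" for s
    define w' where "w' r = (if r < R then w r else z)" for r
    have "A s t = (\<Sum>r<Suc R. w' r s * cnj (w' r t))" if "s < d" "t < d" for s t
      using w psd_form_pivot_rank_one[OF Suc.prems(1) k False that(2), of s] that
      by (simp add: w'_def z_def algebra_simps)
    then show ?thesis by (intro exI allI impI)
  qed
qed

lemma psd_form_gram:
  "psd_form d A \<Longrightarrow> \<exists>(R::nat) w. \<forall>s<d. \<forall>t<d. A s t = (\<Sum>r<R. w r s * cnj (w r t))"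
  using psd_form_gram_if_vanishing[of d A 0] by simp

section \<open>Complete positivity and positivity of the Choi operator\<close>

lemma psd_psi_plus: "psd (D*D) (psi_plus D)"
proof -
  define \<phi> where "\<phi> i = (if i div D = i mod D then 1 else 0 :: complex)" for i
  have cnj_\<phi>: "cnj (\<phi> i) = \<phi> i" for i by (simp add: \<phi>_def)
  have ent: "psi_plus D $$ (i,j) = \<phi> i * \<phi> j / of_nat D" if "i < D*D" "j < D*D" for i j
    using that by (simp add: psi_plus_def \<phi>_def)
  have "qform (D*D) (\<lambda>i j. psi_plus D $$ (i,j)) v v = of_real ((cmod s)^2 / real D)"
    if s: "s = (\<Sum>j<D*D. \<phi> j * v j)" for v s
  proof -
    have "qform (D*D) (\<lambda>i j. psi_plus D $$ (i,j)) v v =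
        (\<Sum>i<D*D. \<Sum>j<D*D. (cnj (v i) * \<phi> i) * (\<phi> j * v j) / of_nat D)"
      unfolding qform_def by (intro sum.cong refl) (simp add: ent)
    also have "\<dots> = (\<Sum>i<D*D. cnj (v i) * \<phi> i) * s / of_nat D"
      by (simp add: s sum_product sum_divide_distrib)
    also have "(\<Sum>i<D*D. cnj (v i) * \<phi> i) = cnj s"
      by (simp add: s cnj_\<phi> mult.commute)
    also have "cnj s * s = of_real ((cmod s)^2)"
      using complex_norm_square[of s] by (simp add: mult.commute)
    finally show ?thesis by simp
  qed
  then show ?thesis unfolding psd_iff_psd_form psd_form_def by (simp add: psi_plus_def)
qed

lemma psd_choi_if_CP: "CP D dY \<Gamma> \<Longrightarrow> psd (D*dY) (choi D dY \<Gamma>)"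
  unfolding choi_def CP_def using psd_psi_plus by blast

lemma sum_reorder_interleaved:
  "(\<Sum>b\<in>B. \<Sum>m'\<in>A. \<Sum>b'\<in>B. \<Sum>c\<in>C. \<Sum>c'\<in>C. F b m' b' c c') =
   (\<Sum>c\<in>C. \<Sum>m'\<in>A. \<Sum>c'\<in>C. \<Sum>b\<in>B. \<Sum>b'\<in>B. F b m' b' c c')"
proof -
  have "(\<Sum>b\<in>B. \<Sum>m'\<in>A. \<Sum>b'\<in>B. \<Sum>c\<in>C. \<Sum>c'\<in>C. F b m' b' c c') =
        (\<Sum>m'\<in>A. \<Sum>b\<in>B. \<Sum>c\<in>C. \<Sum>b'\<in>B. \<Sum>c'\<in>C. F b m' b' c c')"
    by (subst sum.swap) (intro sum.cong refl sum.swap)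
  also have "\<dots> = (\<Sum>m'\<in>A. \<Sum>c\<in>C. \<Sum>b\<in>B. \<Sum>c'\<in>C. \<Sum>b'\<in>B. F b m' b' c c')"
    by (intro sum.cong refl) (subst sum.swap, intro sum.cong refl sum.swap)
  also have "\<dots> = (\<Sum>c\<in>C. \<Sum>m'\<in>A. \<Sum>c'\<in>C. \<Sum>b\<in>B. \<Sum>b'\<in>B. F b m' b' c c')"
    by (subst sum.swap) (intro sum.cong refl sum.swap)
  finally show ?thesis .
qed

text \<open>With Kraus operators \<open>(K\<^sub>r)\<^bsub>bc\<^esub> = w r (c*dB+b)\<close> read off a Gram decomposition of \<open>S\<close>,
  the vector \<open>u r\<close> below is \<open>(1 \<otimes> K\<^sub>r)\<^sup>\<dagger> v\<close>.\<close>

lemma qform_gram_block_expansion: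
  fixes X S Y :: "nat \<Rightarrow> nat \<Rightarrow> complex" and w :: "nat \<Rightarrow> nat \<Rightarrow> complex" and v :: "nat \<Rightarrow> complex"
  assumes S: "\<forall>s<D*dB. \<forall>t<D*dB. S s t = (\<Sum>r<R. w r s * cnj (w r t))"
    and Y: "\<And>m b m' b'. b < dB \<Longrightarrow> b' < dB \<Longrightarrow>
      Y (m*dB+b) (m'*dB+b') = (\<Sum>c<D. \<Sum>c'<D. X (m*D+c) (m'*D+c') * S (c*dB+b) (c'*dB+b'))"
  defines "u \<equiv> \<lambda>r p. \<Sum>b<dB. cnj (w r ((p mod D)*dB + b)) * v ((p div D)*dB + b)"
  shows "qform (n*dB) Y v v = (\<Sum>r<R. qform (n*D) X (u r) (u r))"
proof -
  define F where "F m b m' b' c c' =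
    cnj (v (m*dB+b)) * X (m*D+c) (m'*D+c') * S (c*dB+b) (c'*dB+b') * v (m'*dB+b')" for m b m' b' c c'
  define G where "G r m c m' c' = cnj (u r (m*D+c)) * X (m*D+c) (m'*D+c') * u r (m'*D+c')"
    for r m c m' c'
  have "qform (n*dB) Y v v = (\<Sum>m<n. \<Sum>b<dB. \<Sum>m'<n. \<Sum>b'<dB. \<Sum>c<D. \<Sum>c'<D. F m b m' b' c c')"
    unfolding qform_def sum_lessThan_mult[of _ n dB]
    by (simp add: Y F_def sum_distrib_left sum_distrib_right mult_ac)
  also have "\<dots> = (\<Sum>m<n. \<Sum>c<D. \<Sum>m'<n. \<Sum>c'<D. \<Sum>b<dB. \<Sum>b'<dB. F m b m' b' c c')"
    by (intro sum.cong refl sum_reorder_interleaved)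
  also have "\<dots> = (\<Sum>m<n. \<Sum>c<D. \<Sum>m'<n. \<Sum>c'<D. \<Sum>r<R. G r m c m' c')"
  proof (rule sum.cong[OF refl])+
    fix m c m' c' assume c: "c \<in> {..<D}" and c': "c' \<in> {..<D}"
    have "(\<Sum>b<dB. \<Sum>b'<dB. F m b m' b' c c') = (\<Sum>b<dB. \<Sum>b'<dB. \<Sum>r<R.
        cnj (v (m*dB+b)) * X (m*D+c) (m'*D+c') * (w r (c*dB+b) * cnj (w r (c'*dB+b'))) * v (m'*dB+b'))"
      using S c c' mult_index_less by (intro sum.cong refl) (simp add: F_def sum_distrib_left sum_distrib_right)
    also have "\<dots> = (\<Sum>r<R. \<Sum>b<dB. \<Sum>b'<dB.
        cnj (v (m*dB+b)) * X (m*D+c) (m'*D+c') * (w r (c*dB+b) * cnj (w r (c'*dB+b'))) * v (m'*dB+b'))"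
      by (simp only: sum.swap[of _ _ "{..<R}"])
    also have "\<dots> = (\<Sum>r<R. G r m c m' c')"
      using c c' by (intro sum.cong refl)
        (simp add: G_def u_def sum_product sum_distrib_left sum_distrib_right mult_ac)
    finally show "(\<Sum>b<dB. \<Sum>b'<dB. F m b m' b' c c') = (\<Sum>r<R. G r m c m' c')" .
  qed
  also have "\<dots> = (\<Sum>r<R. \<Sum>m<n. \<Sum>c<D. \<Sum>m'<n. \<Sum>c'<D. G r m c m' c')"
    by (simp only: sum.swap[of _ _ "{..<R}"])
  also have "\<dots> = (\<Sum>r<R. qform (n*D) X (u r) (u r))"
    unfolding qform_def sum_lessThan_mult[of _ n D] G_def by simp
  finally show ?thesis .
qed

lemma sum_nonneg_Reals:
  assumes "\<And>r. r \<in> A \<Longrightarrow> z r \<in> \<real> \<and> Re (z r) \<ge> 0"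
  shows "sum z A \<in> \<real> \<and> Re (sum z A) \<ge> 0"
proof
  have "Im (sum z A) = 0" using assms by (simp add: complex_is_Real_iff)
  then show "sum z A \<in> \<real>" by (simp add: complex_is_Real_iff)
  show "Re (sum z A) \<ge> 0" using assms by (simp add: sum_nonneg)
qed

text \<open>The inverse of \<open>choi\<close>: \<open>\<Gamma> X = D Tr\<^bsub>C'\<^esub> ((X\<^sup>T \<otimes> 1) J(\<Gamma>))\<close>.\<close>

definition map_of_choi :: "nat \<Rightarrow> nat \<Rightarrow> complex mat \<Rightarrow> cmap" where
  "map_of_choi D dB S X = mat dB dB (\<lambda>(b,b'). of_nat D * (\<Sum>c<D. \<Sum>c'<D. X$$(c,c') * S$$(c*dB+b, c'*dB+b')))"

lemma linear_cmap_map_of_choi: "linear_cmap D dB (map_of_choi D dB S)"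
  unfolding linear_cmap_def
proof (intro conjI ballI allI)
  fix X Y :: "complex mat" assume X: "X \<in> carrier_mat D D" and Y: "Y \<in> carrier_mat D D"
  show "map_of_choi D dB S (X + Y) = map_of_choi D dB S X + map_of_choi D dB S Y"
    using X Y by (auto simp: map_of_choi_def ring_distribs sum.distrib intro!: eq_matI)
  fix c
  show "map_of_choi D dB S (c \<cdot>\<^sub>m X) = c \<cdot>\<^sub>m map_of_choi D dB S X"
    using X by (auto simp: map_of_choi_def sum_distrib_left mult_ac intro!: eq_matI)
qed (simp add: map_of_choi_def)

lemma map_of_choi_choi:
  assumes "linear_cmap D dY \<Gamma>" "X \<in> carrier_mat D D" "D > 0"
  shows "map_of_choi D dY (choi D dY \<Gamma>) X = \<Gamma> X"
  using assms linear_cmapD(1)[OF assms(1,2)]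
  by (auto simp: map_of_choi_def linear_cmap_choi_expansion[OF assms] intro!: eq_matI)

lemma map_of_choi_msum:
  "msum dB n (\<lambda>l. map_of_choi D dB (\<sigma> l) X) = map_of_choi D dB (msum (D*dB) n \<sigma>) X"
  by (auto simp: map_of_choi_def msum_entry mult_index_less sum_distrib_left sum_distrib_right
      sum.swap[of _ "{..<n}"] mult_ac intro!: eq_matI)

lemma map_of_choi_smult:
  "S \<in> carrier_mat (D*dB) (D*dB) \<Longrightarrow> map_of_choi D dB (c \<cdot>\<^sub>m S) X = c \<cdot>\<^sub>m map_of_choi D dB S X"
  by (auto simp: map_of_choi_def mult_index_less sum_distrib_left mult_ac intro!: eq_matI)

lemma id_tensor_map_of_choi_entry:
  assumes "b < dB" "b' < dB" "m < n" "m' < n"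
  shows "id_tensor n D dB (map_of_choi D dB S) X $$ (m*dB+b, m'*dB+b') = of_nat D *
    (\<Sum>c<D. \<Sum>c'<D. X $$ (m*D+c, m'*D+c') * S $$ (c*dB+b, c'*dB+b'))"
  using assms mult_index_less[of m n] mult_index_less[of m' n]
  by (simp add: id_tensor_def map_of_choi_def)

lemma CP_map_of_choi:
  assumes S: "psd (D*dB) S"
  shows "CP D dB (map_of_choi D dB S)"
  unfolding CP_def
proof (intro conjI allI impI linear_cmap_map_of_choi)
  fix n X assume "psd (n*D) X"
  then have PX: "psd_form (n*D) (\<lambda>p q. X$$(p,q))" unfolding psd_iff_psd_form by blast
  obtain R :: nat and w where w: "\<forall>s<D*dB. \<forall>t<D*dB. S$$(s,t) = (\<Sum>r<R. w r s * cnj (w r t))"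
    using psd_form_gram[of "D*dB" "\<lambda>s t. S$$(s,t)"] S unfolding psd_iff_psd_form by blast
  let ?Y = "id_tensor n D dB (map_of_choi D dB S) X"
  define Y where "Y i j = (\<Sum>c<D. \<Sum>c'<D.
      X $$ ((i div dB)*D+c, (j div dB)*D+c') * S $$ (c*dB + i mod dB, c'*dB + j mod dB))" for i j
  have "?Y $$ (i,j) = of_nat D * Y i j" if "i < n*dB" "j < n*dB" for i j
    using mult_index_decomp[OF that(1)] mult_index_decomp[OF that(2)]
      id_tensor_map_of_choi_entry[of "i mod dB" dB "j mod dB" "i div dB" n "j div dB" D S X]
    by (simp add: Y_def)
  then have "qform (n*dB) (\<lambda>i j. ?Y $$ (i,j)) v v = of_nat D * qform (n*dB) Y v v" for v
    by (simp add: qform_def sum_distrib_left mult_ac)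
  moreover have "qform (n*dB) Y v v \<in> \<real> \<and> Re (qform (n*dB) Y v v) \<ge> 0" for v
  proof -
    have "\<exists>u. qform (n*dB) Y v v = (\<Sum>r<R. qform (n*D) (\<lambda>p q. X$$(p,q)) (u r) (u r))"
      by (rule exI, rule qform_gram_block_expansion[where S = "\<lambda>s t. S$$(s,t)", OF w])
        (simp add: Y_def)
    then obtain u where "qform (n*dB) Y v v = (\<Sum>r<R. qform (n*D) (\<lambda>p q. X$$(p,q)) (u r) (u r))" ..
    then show ?thesis by (simp only:) (rule sum_nonneg_Reals, rule psd_formD[OF PX])
  qed
  ultimately have "psd_form (n*dB) (\<lambda>i j. ?Y $$ (i,j))"
    unfolding psd_form_def by (auto simp: complex_is_Real_iff)
  then show "psd (n*dB) ?Y" by (simp add: psd_iff_psd_form id_tensor_def)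
qed

lemma meas_assemblage_carrier:
  "meas_assemblage d na nx M \<Longrightarrow> a < na \<Longrightarrow> x < nx \<Longrightarrow> M a x \<in> carrier_mat d d"
  by (simp add: meas_assemblage_def psd_def)

lemma meas_assemblage_sum_entry:
  assumes "meas_assemblage d na nx M" "x < nx" "k < d" "k' < d"
  shows "(\<Sum>a<na. M a x $$ (k,k')) = (if k = k' then 1 else 0)"
proof -
  have "msum d na (\<lambda>a. M a x) = 1\<^sub>m d" using assms unfolding meas_assemblage_def by blast
  then have "msum d na (\<lambda>a. M a x) $$ (k,k') = 1\<^sub>m d $$ (k,k')" by simp
  then show ?thesis using assms by (simp add: msum_entry)
qed

lemma induced_assemblage_eq:
  "induced_assemblage dA dB \<Lambda>AB M a x = (\<lambda>X. ptrace1 dA dB (tensor (M a x) (1\<^sub>m dB) * \<Lambda>AB X))"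
  by (rule ext) (simp add: induced_assemblage_def)

lemma linear_cmap_induced_assemblage:
  "linear_cmap dC (dA*dB) \<Lambda>AB \<Longrightarrow> meas_assemblage dA na nx M \<Longrightarrow> a < na \<Longrightarrow> x < nx \<Longrightarrow>
   linear_cmap dC dB (induced_assemblage dA dB \<Lambda>AB M a x)"
  unfolding induced_assemblage_eq by (intro linear_cmap_ptrace1_tensor_mult meas_assemblage_carrier)

lemma msum_induced_assemblage:
  assumes ext: "channel_extension dA dB dC \<Lambda>AB \<Lambda>B"
    and MA: "meas_assemblage dA na nx M" and x: "x < nx" and X: "X \<in> carrier_mat dC dC"
  shows "msum dB na (\<lambda>a. induced_assemblage dA dB \<Lambda>AB M a x X) = \<Lambda>B X"
proof -
  note LX = channel_extensionD(1)[OF ext X] and PB = channel_extensionD(2)[OF ext X]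
  show ?thesis
  proof (rule eq_matI)
    fix b b' assume "b < dim_row (\<Lambda>B X)" "b' < dim_col (\<Lambda>B X)"
    then have b: "b < dB" and b': "b' < dB" using PB[symmetric] by (simp_all add: ptrace1_def)
    have "msum dB na (\<lambda>a. induced_assemblage dA dB \<Lambda>AB M a x X) $$ (b,b') =
        (\<Sum>a<na. \<Sum>k<dA. \<Sum>k'<dA. M a x $$ (k,k') * \<Lambda>AB X $$ (k'*dB+b, k*dB+b'))"
      using b b' ptrace1_tensor_mult_entry[OF meas_assemblage_carrier[OF MA _ x] LX b b']
      by (simp add: msum_entry induced_assemblage_def)
    also have "\<dots> = (\<Sum>k<dA. \<Sum>k'<dA. (\<Sum>a<na. M a x $$ (k,k')) * \<Lambda>AB X $$ (k'*dB+b, k*dB+b'))"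
      by (simp add: sum_distrib_right sum.swap[of _ "{..<na}"])
    also have "\<dots> = (\<Sum>k<dA. \<Sum>k'<dA. if k = k' then \<Lambda>AB X $$ (k'*dB+b, k*dB+b') else 0)"
      by (intro sum.cong refl) (simp add: meas_assemblage_sum_entry[OF MA x])
    also have "\<dots> = ptrace1 dA dB (\<Lambda>AB X) $$ (b,b')"
      using b b' by (simp add: ptrace1_def)
    finally show "msum dB na (\<lambda>a. induced_assemblage dA dB \<Lambda>AB M a x X) $$ (b,b') = \<Lambda>B X $$ (b,b')"
      using PB by simp
  qed (use PB[symmetric] in \<open>simp_all add: ptrace1_def\<close>)
qed

lemma msum_eq_msum_of_cond_prob:
  assumes cp: "cond_prob na nx nl p" and x: "x < nx"
    and F: "\<And>l. l < nl \<Longrightarrow> F l \<in> carrier_mat d d"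
    and G: "\<And>a. a < na \<Longrightarrow> G a = msum d nl (\<lambda>l. complex_of_real (p a x l) \<cdot>\<^sub>m F l)"
  shows "msum d nl F = msum d na G"
proof (rule eq_matI)
  fix i j assume "i < dim_row (msum d na G)" "j < dim_col (msum d na G)"
  then have i: "i < d" and j: "j < d" by simp_all
  have "(\<Sum>a<na. complex_of_real (p a x l)) = 1" if "l < nl" for l
    using cp x that unfolding cond_prob_def by (metis of_real_1 of_real_sum)
  then have "msum d nl F $$ (i,j) = (\<Sum>l<nl. \<Sum>a<na. complex_of_real (p a x l) * F l $$ (i,j))"
    using i j by (simp add: msum_entry sum_distrib_right[symmetric])
  also have "\<dots> = msum d na G $$ (i,j)"
    using i j G msum_smult_entry[OF F i j] by (simp add: msum_entry sum.swap[of _ "{..<na}"])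
  finally show "msum d nl F $$ (i,j) = msum d na G $$ (i,j)" .
qed simp_all

lemma ptrace1_choi_state:
  assumes "channel_extension dA dB dC \<Lambda>AB \<Lambda>B"
  shows "ptrace1 dA (dC*dB) (reorder_CAB_to_A_CB dC dA dB (choi dC (dA*dB) \<Lambda>AB)) = choi dC dB \<Lambda>B"
  using channel_extensionD[OF assms]
  by (simp add: ptrace1_reorder_choi cong: choi_cong)

lemma choi_induced_assemblage:
  assumes "channel_extension dA dB dC \<Lambda>AB \<Lambda>B" "meas_assemblage dA na nx M" "a < na" "x < nx"
  shows "ptrace1 dA (dC*dB) (tensor (M a x) (1\<^sub>m (dC*dB)) *
           reorder_CAB_to_A_CB dC dA dB (choi dC (dA*dB) \<Lambda>AB))
       = choi dC dB (induced_assemblage dA dB \<Lambda>AB M a x)"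
  unfolding induced_assemblage_eq
  by (rule ptrace1_tensor_mult_reorder_choi[OF channel_extensionD(1)[OF assms(1)]
        meas_assemblage_carrier[OF assms(2-4)]])

section \<open>Steering of the extension versus steering of its Choi state\<close>

lemma unsteerable_state_if_unsteerable_extension:
  assumes ext: "channel_extension dA dB dC \<Lambda>AB \<Lambda>B" and chB: "channel dC dB \<Lambda>B"
    and UE: "unsteerable_extension dA dB dC \<Lambda>AB"
  shows "unsteerable_state dA (dC*dB) (reorder_CAB_to_A_CB dC dA dB (choi dC (dA*dB) \<Lambda>AB))"
  unfolding unsteerable_state_def
proof (intro allI impI)
  fix na nx M assume MA: "meas_assemblage dA na nx M"
  let ?\<rho> = "reorder_CAB_to_A_CB dC dA dB (choi dC (dA*dB) \<Lambda>AB)"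
  show "\<exists>nl \<sigma> p. (\<forall>l<nl. psd (dC*dB) (\<sigma> l)) \<and> msum (dC*dB) nl \<sigma> = ptrace1 dA (dC*dB) ?\<rho> \<and>
           cond_prob na nx nl p \<and>
           (\<forall>a<na. \<forall>x<nx. ptrace1 dA (dC*dB) (tensor (M a x) (1\<^sub>m (dC*dB)) * ?\<rho>) =
               msum (dC*dB) nl (\<lambda>l. complex_of_real (p a x l) \<cdot>\<^sub>m \<sigma> l))"
  proof (cases "nx = 0")
    case True
    \<comment> \<open>no settings, so the instrument need not sum to \<open>\<Lambda>B\<close>; take the trivial model instead\<close>
    have "msum (dC*dB) 1 (\<lambda>_. choi dC dB \<Lambda>B) = choi dC dB \<Lambda>B"
      by (auto simp: msum_def intro!: eq_matI)
    moreover have "psd (dC*dB) (choi dC dB \<Lambda>B)" using chB psd_choi_if_CP by (simp add: channel_def)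
    ultimately show ?thesis using True ptrace1_choi_state[OF ext]
      by (intro exI[of _ "1::nat"] exI[of _ "\<lambda>_. choi dC dB \<Lambda>B"]) (simp add: cond_prob_def)
  next
    case False
    obtain nl I p where inst: "instrument dC dB nl I" and cp: "cond_prob na nx nl p"
      and eqs: "\<forall>a<na. \<forall>x<nx. \<forall>X \<in> carrier_mat dC dC.
           induced_assemblage dA dB \<Lambda>AB M a x X = msum dB nl (\<lambda>l. complex_of_real (p a x l) \<cdot>\<^sub>m I l X)"
      using UE MA unfolding unsteerable_extension_def unsteerable_channel_assemblage_def by blast
    have CPI: "CP dC dB (I l)" if "l < nl" for l using inst that by (simp add: instrument_def)
    have IX: "I l X \<in> carrier_mat dB dB" if "l < nl" "X \<in> carrier_mat dC dC" for l X
      using CPI[OF that(1)] linear_cmapD(1)[OF _ that(2)] by (simp add: CP_def)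
    have x0: "0 < nx" using False by simp
    have "msum dB nl (\<lambda>l. I l X) = \<Lambda>B X" if X: "X \<in> carrier_mat dC dC" for X
    proof -
      have "msum dB nl (\<lambda>l. I l X) = msum dB na (\<lambda>a. induced_assemblage dA dB \<Lambda>AB M a 0 X)"
        by (rule msum_eq_msum_of_cond_prob[OF cp x0]) (use IX X eqs x0 in auto)
      also have "\<dots> = \<Lambda>B X" by (rule msum_induced_assemblage[OF ext MA x0 X])
      finally show ?thesis .
    qed
    then have "msum (dC*dB) nl (\<lambda>l. choi dC dB (I l)) = ptrace1 dA (dC*dB) ?\<rho>"
      by (simp add: ptrace1_choi_state[OF ext] choi_msum[symmetric] IX cong: choi_cong)
    moreover have "ptrace1 dA (dC*dB) (tensor (M a x) (1\<^sub>m (dC*dB)) * ?\<rho>) =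
        msum (dC*dB) nl (\<lambda>l. complex_of_real (p a x l) \<cdot>\<^sub>m choi dC dB (I l))"
      if "a < na" "x < nx" for a x
      using that eqs by (simp add: choi_induced_assemblage[OF ext MA] choi_msum choi_smult IX
          cong: choi_cong msum_cong)
    moreover have "psd (dC*dB) (choi dC dB (I l))" if "l < nl" for l
      using psd_choi_if_CP[OF CPI[OF that]] .
    ultimately show ?thesis using cp
      by (intro exI[of _ nl] exI[of _ "\<lambda>l. choi dC dB (I l)"] exI[of _ p]) auto
  qed
qed

lemma unsteerable_extension_if_unsteerable_state:
  assumes ext: "channel_extension dA dB dC \<Lambda>AB \<Lambda>B" and chB: "channel dC dB \<Lambda>B" and dC: "dC > 0"
    and US: "unsteerable_state dA (dC*dB) (reorder_CAB_to_A_CB dC dA dB (choi dC (dA*dB) \<Lambda>AB))"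
  shows "unsteerable_extension dA dB dC \<Lambda>AB"
  unfolding unsteerable_extension_def
proof (intro allI impI)
  fix na nx M assume MA: "meas_assemblage dA na nx M"
  let ?\<rho> = "reorder_CAB_to_A_CB dC dA dB (choi dC (dA*dB) \<Lambda>AB)"
  obtain nl \<sigma> p where psd\<sigma>: "\<forall>l<nl. psd (dC*dB) (\<sigma> l)" and cp: "cond_prob na nx nl p"
    and sum\<sigma>: "msum (dC*dB) nl \<sigma> = ptrace1 dA (dC*dB) ?\<rho>"
    and eqs: "\<forall>a<na. \<forall>x<nx. ptrace1 dA (dC*dB) (tensor (M a x) (1\<^sub>m (dC*dB)) * ?\<rho>) =
               msum (dC*dB) nl (\<lambda>l. complex_of_real (p a x l) \<cdot>\<^sub>m \<sigma> l)"
    using US MA unfolding unsteerable_state_def by blast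
  have \<sigma>_carrier: "\<sigma> l \<in> carrier_mat (dC*dB) (dC*dB)" if "l < nl" for l
    using psd\<sigma> that by (simp add: psd_def)
  define I where "I l = map_of_choi dC dB (\<sigma> l)" for l
  have "channel dC dB (\<lambda>X. msum dB nl (\<lambda>l. I l X))"
    using chB by (rule channel_cong)
      (simp add: I_def map_of_choi_msum sum\<sigma> ptrace1_choi_state[OF ext] map_of_choi_choi
        channel_linear[OF chB] dC)
  then have "instrument dC dB nl I"
    using psd\<sigma> CP_map_of_choi by (simp add: instrument_def I_def)
  moreover have "induced_assemblage dA dB \<Lambda>AB M a x X =
      msum dB nl (\<lambda>l. complex_of_real (p a x l) \<cdot>\<^sub>m I l X)"
    if "a < na" "x < nx" "X \<in> carrier_mat dC dC" for a x X
  proof -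
    have "linear_cmap dC dB (induced_assemblage dA dB \<Lambda>AB M a x)"
      using linear_cmap_induced_assemblage[OF channel_extension_linear[OF ext] MA that(1,2)] .
    from map_of_choi_choi[OF this that(3) dC] show ?thesis
      using that eqs choi_induced_assemblage[OF ext MA]
      by (simp add: I_def map_of_choi_msum[symmetric] map_of_choi_smult \<sigma>_carrier cong: msum_cong)
  qed
  ultimately show "unsteerable_channel_assemblage dC dB na nx (induced_assemblage dA dB \<Lambda>AB M)"
    unfolding unsteerable_channel_assemblage_def using cp
    by (intro exI[of _ nl] exI[of _ I] exI[of _ p]) auto
qed

theorem theorem1:
  fixes dA dB dC :: nat and \<Lambda>AB \<Lambda>B :: cmap
  assumes "dA > 0" and "dB > 0" and "dC > 0"
    and "channel dC dB \<Lambda>B"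
    and "channel_extension dA dB dC \<Lambda>AB \<Lambda>B"
  shows "steerable_extension dA dB dC \<Lambda>AB \<longleftrightarrow>
         steerable_state dA (dC*dB) (reorder_CAB_to_A_CB dC dA dB (choi dC (dA*dB) \<Lambda>AB))"
  unfolding steerable_extension_def steerable_state_def
  using unsteerable_state_if_unsteerable_extension[OF assms(5,4)]
    unsteerable_extension_if_unsteerable_state[OF assms(5,4,3)] by blast

end
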